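(* Let $G=(V,E)$ be an infinite, connected, locally finite, vertex-transitive graph such that simple random walk is transient ($g(o,y)<\infty$ for all $y$) but $\sum_{y\in V}g(o,y)^2=\infty$, where $o\in V$ is fixed. Let $(s(x))_{x\in V}$ be i.i.d. real random variables with $\mathbb{E}\,s=1$ and $0<\operatorname{Var}s<\infty$. Then $\mathbb{P}\{s\text{ stabilizes}\}=0$.
   Context: $g(o,y)=\sum_{j\ge0}\mathbb{P}_o(X_j=y)$ is the Green function of simple random walk $(X_j)$ on $G$. $\Delta u(x)=\sum_{y\sim x}(u(y)-u(x))$. $s:V\to\mathbb{R}$ stabilizes if there exists $f:V\to[0,\infty)$ with $s+\Delta f\le1$ pointwise. *)

theory Defs
  imports "HOL-Probability.Probability"
begin

text \<open>Graphs: vertex set = UNIV of type 'v, adjacency relation E.\<close>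

definition simple_graph :: "('v \<Rightarrow> 'v \<Rightarrow> bool) \<Rightarrow> bool" where
  "simple_graph E \<longleftrightarrow> (\<forall>x y. E x y \<longrightarrow> E y x) \<and> (\<forall>x. \<not> E x x)"

definition locally_finite :: "('v \<Rightarrow> 'v \<Rightarrow> bool) \<Rightarrow> bool" where
  "locally_finite E \<longleftrightarrow> (\<forall>x. finite {y. E x y})"

definition connected_graph :: "('v \<Rightarrow> 'v \<Rightarrow> bool) \<Rightarrow> bool" where
  "connected_graph E \<longleftrightarrow> (\<forall>x y. (x, y) \<in> {(u, v). E u v}\<^sup>*)"

definition graph_automorphism :: "('v \<Rightarrow> 'v \<Rightarrow> bool) \<Rightarrow> ('v \<Rightarrow> 'v) \<Rightarrow> bool" where
  "graph_automorphism E \<phi> \<longleftrightarrow> bij \<phi> \<and> (\<forall>u v. E u v \<longleftrightarrow> E (\<phi> u) (\<phi> v))"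

definition vertex_transitive :: "('v \<Rightarrow> 'v \<Rightarrow> bool) \<Rightarrow> bool" where
  "vertex_transitive E \<longleftrightarrow> (\<forall>x y. \<exists>\<phi>. graph_automorphism E \<phi> \<and> \<phi> x = y)"

definition degree :: "('v \<Rightarrow> 'v \<Rightarrow> bool) \<Rightarrow> 'v \<Rightarrow> nat" where
  "degree E x = card {y. E x y}"

definition srw_step :: "('v \<Rightarrow> 'v \<Rightarrow> bool) \<Rightarrow> 'v \<Rightarrow> 'v \<Rightarrow> real" where
  "srw_step E x y = (if E x y then 1 / real (degree E x) else 0)"

fun srw_prob :: "('v \<Rightarrow> 'v \<Rightarrow> bool) \<Rightarrow> nat \<Rightarrow> 'v \<Rightarrow> 'v \<Rightarrow> real" where
  "srw_prob E 0 x y = (if x = y then 1 else 0)"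
| "srw_prob E (Suc j) x y = (\<Sum>z\<in>{z. E x z}. srw_step E x z * srw_prob E j z y)"

text \<open>Green function g(o,y) = sum_j P_o(X_j = y) (meaningful when summable).\<close>
definition green :: "('v \<Rightarrow> 'v \<Rightarrow> bool) \<Rightarrow> 'v \<Rightarrow> 'v \<Rightarrow> real" where
  "green E v0 y = (\<Sum>j. srw_prob E j v0 y)"

definition laplacian :: "('v \<Rightarrow> 'v \<Rightarrow> bool) \<Rightarrow> ('v \<Rightarrow> real) \<Rightarrow> 'v \<Rightarrow> real" where
  "laplacian E u x = (\<Sum>y\<in>{y. E x y}. u y - u x)"

definition stabilizes :: "('v \<Rightarrow> 'v \<Rightarrow> bool) \<Rightarrow> ('v \<Rightarrow> real) \<Rightarrow> bool" where
  "stabilizes E s \<longleftrightarrow> (\<exists>f :: 'v \<Rightarrow> real. (\<forall>x. f x \<ge> 0) \<and> (\<forall>x. s x + laplacian E f x \<le> 1))"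

end

theory Submission
  imports Defs
begin

text \<open>
  If \<open>s\<close> stabilizes with odometer \<open>f \<ge> 0\<close>, then \<open>s - 1 \<le> -\<Delta>f\<close>; applying the powers
  \<open>P\<^sup>j\<close> of the transition operator at \<open>o\<close> and summing over \<open>j < n\<close> telescopes to
  \<open>\<Sum>\<^sub>y g\<^sub>n(o,y) (s y - 1) \<le> deg \<cdot> f o\<close>, where \<open>g\<^sub>n\<close> is the Green function truncated at
  time \<open>n\<close>. By transitivity and symmetry of the walk, \<open>g\<^sub>n \<le> 2 g(o,o) + 1\<close>, while
  \<open>\<Sum>\<^sub>y g\<^sub>n(o,y)\<^sup>2 \<rightarrow> \<infinity>\<close>.

  For an i.i.d. field with mean 1 and positive finite variance, a sum \<open>\<Sum>\<^sub>y a\<^sub>y (s y - 1)\<close>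
  with bounded weights exceeds a fixed multiple of \<open>\<parallel>a\<parallel>\<^sub>2\<close> with probability bounded below
  once \<open>\<parallel>a\<parallel>\<^sub>2\<close> is large: truncate \<open>s\<close>, use exponential moments for the bounded part
  and Chebyshev for the rest. Hence the sums above are unbounded with positive probability;
  boundedness being a tail event, Kolmogorov's 0-1 law makes them unbounded almost surely,
  so \<open>s\<close> stabilizes with probability 0.
\<close>

section \<open>Simple random walk on a vertex-transitive graph\<close>

fun walk_ends :: "('v \<Rightarrow> 'v \<Rightarrow> bool) \<Rightarrow> 'v \<Rightarrow> nat \<Rightarrow> 'v set" where
  "walk_ends E x 0 = {x}"
| "walk_ends E x (Suc j) = (\<Union>z\<in>{z. E x z}. walk_ends E z j)"

fun srw_expect :: "('v \<Rightarrow> 'v \<Rightarrow> bool) \<Rightarrow> nat \<Rightarrow> ('v \<Rightarrow> real) \<Rightarrow> 'v \<Rightarrow> real" where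
  "srw_expect E 0 h x = h x"
| "srw_expect E (Suc j) h x = (\<Sum>z\<in>{z. E x z}. srw_step E x z * srw_expect E j h z)"

lemma finite_walk_ends: "locally_finite E \<Longrightarrow> finite (walk_ends E x j)"
  by (induction j arbitrary: x) (auto simp: locally_finite_def)

lemma srw_step_nonneg: "srw_step E x z \<ge> 0"
  by (simp add: srw_step_def)

lemma srw_prob_nonneg: "srw_prob E j x y \<ge> 0"
  by (induction j arbitrary: x) (auto intro!: sum_nonneg mult_nonneg_nonneg srw_step_nonneg)

lemma srw_prob_eq_0: "y \<notin> walk_ends E x j \<Longrightarrow> srw_prob E j x y = 0"
  by (induction j arbitrary: x) auto

lemma srw_expect_eq_sum:
  assumes "locally_finite E" and "finite U" and "walk_ends E x j \<subseteq> U"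
  shows "srw_expect E j h x = (\<Sum>y\<in>U. srw_prob E j x y * h y)"
  using assms(2,3)
proof (induction j arbitrary: x)
  case 0
  then show ?case by (simp add: sum.delta mult_delta_left)
next
  case (Suc j)
  have "srw_expect E (Suc j) h x = (\<Sum>z\<in>{z. E x z}. srw_step E x z * (\<Sum>y\<in>U. srw_prob E j z y * h y))"
    unfolding srw_expect.simps(2)
  proof (rule sum.cong[OF refl])
    fix z assume "z \<in> {z. E x z}"
    then show "srw_step E x z * srw_expect E j h z = srw_step E x z * (\<Sum>y\<in>U. srw_prob E j z y * h y)"
      using Suc by (subst Suc.IH) auto
  qed
  also have "\<dots> = (\<Sum>y\<in>U. srw_prob E (Suc j) x y * h y)"
    by (simp add: sum_distrib_left sum_distrib_right mult.assoc sum.swap[of _ "{z. E x z}"])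
  finally show ?case .
qed

lemma srw_expect_add: "srw_expect E (a + b) h x = srw_expect E a (srw_expect E b h) x"
  by (induction a arbitrary: x) auto

lemma srw_expect_mono: "(\<And>y. h y \<le> k y) \<Longrightarrow> srw_expect E j h x \<le> srw_expect E j k x"
  by (induction j arbitrary: x) (auto intro!: sum_mono mult_left_mono srw_step_nonneg)

lemma srw_expect_nonneg: "(\<And>y. 0 \<le> h y) \<Longrightarrow> 0 \<le> srw_expect E j h x"
  by (induction j arbitrary: x) (auto intro!: sum_nonneg mult_nonneg_nonneg srw_step_nonneg)

lemma srw_expect_linear:
  "srw_expect E j (\<lambda>y. a * h y + b * k y) x = a * srw_expect E j h x + b * srw_expect E j k x"
  by (induction j arbitrary: x) (auto simp: sum_distrib_left sum.distrib algebra_simps)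

lemma srw_expect_indicator:
  assumes "locally_finite E"
  shows "srw_expect E j (\<lambda>w. if w = y then 1 else 0) x = srw_prob E j x y"
  using srw_expect_eq_sum[OF assms finite_walk_ends[OF assms] order.refl,
      where h="\<lambda>w. if w = y then 1 else 0"]
  by (cases "y \<in> walk_ends E x j") (auto simp: srw_prob_eq_0 finite_walk_ends[OF assms] if_distrib cong: if_cong)

lemma srw_prob_add:
  assumes "locally_finite E" and "finite U" and "walk_ends E x a \<subseteq> U"
  shows "srw_prob E (a + b) x y = (\<Sum>z\<in>U. srw_prob E a x z * srw_prob E b z y)"
proof -
  have "srw_prob E (a + b) x y = srw_expect E a (srw_expect E b (\<lambda>w. if w = y then 1 else 0)) x"
    by (simp add: srw_expect_indicator[OF assms(1)] flip: srw_expect_add)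
  also have "\<dots> = (\<Sum>z\<in>U. srw_prob E a x z * srw_prob E b z y)"
    by (simp add: srw_expect_eq_sum[OF assms] srw_expect_indicator[OF assms(1)])
  finally show ?thesis .
qed

locale transitive_graph =
  fixes E :: "'v \<Rightarrow> 'v \<Rightarrow> bool" and v0 :: 'v
  assumes simple: "simple_graph E" and infinite_vertices: "infinite (UNIV :: 'v set)"
    and connected: "connected_graph E" and loc_fin: "locally_finite E"
    and transitive: "vertex_transitive E"
begin

definition deg :: nat where "deg = degree E v0"

lemma finite_neighbours: "finite {z. E x z}"
  using loc_fin by (auto simp: locally_finite_def)

lemma edge_sym: "E x y \<Longrightarrow> E y x"
  using simple by (auto simp: simple_graph_def)

lemma neighbours_automorphism:
  assumes "graph_automorphism E \<phi>"
  shows "{z. E (\<phi> x) z} = \<phi> ` {z. E x z}"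
proof -
  have b: "bij \<phi>" and e: "\<And>u v. E u v \<longleftrightarrow> E (\<phi> u) (\<phi> v)"
    using assms by (auto simp: graph_automorphism_def)
  show ?thesis
  proof (intro set_eqI iffI)
    fix z assume "z \<in> {z. E (\<phi> x) z}"
    moreover obtain w where "z = \<phi> w" using b by (metis bij_pointE)
    ultimately show "z \<in> \<phi> ` {z. E x z}" using e by auto
  qed (use e in auto)
qed

lemma degree_eq: "degree E x = deg"
proof -
  obtain \<phi> where a: "graph_automorphism E \<phi>" and "\<phi> v0 = x"
    using transitive by (auto simp: vertex_transitive_def)
  then have "{z. E x z} = \<phi> ` {z. E v0 z}" using neighbours_automorphism by metis
  moreover have "inj \<phi>" using a by (auto simp: graph_automorphism_def bij_def)
  ultimately show ?thesis by (simp add: degree_def deg_def card_image inj_on_subset)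
qed

lemma deg_pos: "deg > 0"
proof -
  obtain y where "y \<noteq> v0"
    using infinite_vertices by (metis finite.simps insertCI subsetI subset_antisym UNIV_I)
  moreover have "(v0, y) \<in> {(u, v). E u v}\<^sup>*" using connected by (auto simp: connected_graph_def)
  ultimately obtain z where "E v0 z"
    by (metis (no_types, lifting) case_prodD converse_rtranclE mem_Collect_eq)
  then show ?thesis using finite_neighbours[of v0] by (auto simp: deg_def degree_def card_gt_0_iff)
qed

lemma srw_step_eq: "srw_step E x z = (if E x z then 1 / real deg else 0)"
  by (simp add: srw_step_def degree_eq)

lemma srw_step_sym: "srw_step E x z = srw_step E z x"
  using edge_sym by (auto simp: srw_step_eq)

lemma sum_srw_step: "(\<Sum>z\<in>{z. E x z}. srw_step E x z) = 1"
  using deg_pos degree_eq[of x] by (simp add: srw_step_eq degree_def)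

lemma laplacian_eq: "laplacian E f x = real deg * (srw_expect E 1 f x - f x)"
proof -
  have "laplacian E f x = (\<Sum>y\<in>{y. E x y}. f y) - real deg * f x"
    using degree_eq[of x] by (simp add: laplacian_def sum_subtractf degree_def)
  moreover have "srw_expect E 1 f x = (\<Sum>y\<in>{y. E x y}. f y) / real deg"
    by (simp add: srw_step_eq sum_divide_distrib)
  ultimately show ?thesis using deg_pos by (simp add: field_simps)
qed

lemma srw_prob_automorphism:
  assumes a: "graph_automorphism E \<phi>"
  shows "srw_prob E j (\<phi> x) (\<phi> y) = srw_prob E j x y"
proof (induction j arbitrary: x)
  case 0
  have "inj \<phi>" using a by (auto simp: graph_automorphism_def bij_def)
  then show ?case by (auto dest: injD)
next
  case (Suc j)
  have inj: "inj \<phi>" and e: "\<And>u v. E u v \<longleftrightarrow> E (\<phi> u) (\<phi> v)"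
    using a by (auto simp: graph_automorphism_def bij_def)
  have "srw_prob E (Suc j) (\<phi> x) (\<phi> y)
      = (\<Sum>z\<in>\<phi> ` {z. E x z}. srw_step E (\<phi> x) z * srw_prob E j z (\<phi> y))"
    using neighbours_automorphism[OF a] by simp
  also have "\<dots> = (\<Sum>z\<in>{z. E x z}. srw_step E (\<phi> x) (\<phi> z) * srw_prob E j (\<phi> z) (\<phi> y))"
    by (rule sum.reindex[unfolded comp_def]) (rule inj_on_subset[OF inj], simp)
  also have "\<dots> = srw_prob E (Suc j) x y"
    using Suc e by (simp add: srw_step_eq)
  finally show ?case .
qed

lemma srw_prob_diag: "srw_prob E j x x = srw_prob E j v0 v0"
proof -
  obtain \<phi> where "graph_automorphism E \<phi>" and "\<phi> v0 = x"
    using transitive by (auto simp: vertex_transitive_def)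
  then show ?thesis using srw_prob_automorphism[of \<phi> j v0 v0] by simp
qed

lemma srw_prob_Suc_right:
  "srw_prob E (Suc j) x y = (\<Sum>z\<in>{z. E y z}. srw_prob E j x z * srw_step E z y)"
proof -
  let ?U = "walk_ends E x j \<union> {z. E y z}"
  have fin: "finite ?U" using finite_walk_ends[OF loc_fin] finite_neighbours by auto
  have step1: "srw_prob E 1 z y = srw_step E z y" for z
    using finite_neighbours[of z] by (auto simp: if_distrib srw_step_eq cong: if_cong)
  have "srw_prob E (j + 1) x y = (\<Sum>z\<in>?U. srw_prob E j x z * srw_prob E 1 z y)"
    by (rule srw_prob_add[OF loc_fin fin]) auto
  also have "\<dots> = (\<Sum>z\<in>?U. srw_prob E j x z * srw_step E z y)"
    by (simp only: step1)
  also have "\<dots> = (\<Sum>z\<in>{z. E y z}. srw_prob E j x z * srw_step E z y)"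
    using edge_sym by (intro sum.mono_neutral_right[OF fin]) (auto simp: srw_step_eq)
  finally show ?thesis by simp
qed

lemma srw_prob_sym: "srw_prob E j x y = srw_prob E j y x"
proof (induction j arbitrary: x y)
  case (Suc j)
  have "srw_prob E (Suc j) x y = (\<Sum>z\<in>{z. E x z}. srw_prob E j y z * srw_step E z x)"
    using Suc.IH srw_step_sym by (simp add: mult.commute)
  also have "\<dots> = srw_prob E (Suc j) y x"
    by (rule srw_prob_Suc_right[symmetric])
  finally show ?case .
qed simp

lemma srw_prob_even_le_diag: "srw_prob E (2 * m) x y \<le> srw_prob E (2 * m) v0 v0"
proof -
  let ?U = "walk_ends E x m \<union> walk_ends E y m"
  have fin: "finite ?U" using finite_walk_ends[OF loc_fin] by auto
  have split: "srw_prob E (2 * m) z z' = (\<Sum>w\<in>?U. srw_prob E m z w * srw_prob E m z' w)"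
    if "z \<in> {x, y}" for z z'
  proof -
    have "srw_prob E (m + m) z z' = (\<Sum>w\<in>?U. srw_prob E m z w * srw_prob E m w z')"
      by (rule srw_prob_add[OF loc_fin fin]) (use that in auto)
    also have "\<dots> = (\<Sum>w\<in>?U. srw_prob E m z w * srw_prob E m z' w)"
      by (rule sum.cong[OF refl]) (simp only: srw_prob_sym[of m _ z'])
    finally show ?thesis by (simp only: mult_2)
  qed
  have ret: "srw_prob E (2 * m) z z = (\<Sum>w\<in>?U. (srw_prob E m z w)\<^sup>2)" if "z \<in> {x, y}" for z
    using split[OF that] by (simp add: power2_eq_square)
  have "srw_prob E (2 * m) x y = (\<Sum>w\<in>?U. srw_prob E m x w * srw_prob E m y w)"
    by (rule split) simp
  also have "\<dots> \<le> (\<Sum>w\<in>?U. ((srw_prob E m x w)\<^sup>2 + (srw_prob E m y w)\<^sup>2) / 2)"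
  proof (intro sum_mono)
    fix w
    show "srw_prob E m x w * srw_prob E m y w \<le> ((srw_prob E m x w)\<^sup>2 + (srw_prob E m y w)\<^sup>2) / 2"
      using sum_squares_bound[of "srw_prob E m x w" "srw_prob E m y w"] by simp
  qed
  also have "\<dots> = (srw_prob E (2 * m) x x + srw_prob E (2 * m) y y) / 2"
    by (simp add: ret sum.distrib flip: sum_divide_distrib)
  finally show ?thesis by (simp add: srw_prob_diag[of "2 * m" x] srw_prob_diag[of "2 * m" y])
qed

lemma srw_prob_le_diag: "srw_prob E j x y \<le> srw_prob E (2 * (j div 2)) v0 v0"
proof (cases "even j")
  case True
  then show ?thesis using srw_prob_even_le_diag[of "j div 2" x y] by simp
next
  case False
  then obtain m where j: "j = Suc (2 * m)" by (metis oddE Suc_eq_plus1)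
  have "srw_prob E j x y = (\<Sum>z\<in>{z. E x z}. srw_step E x z * srw_prob E (2 * m) z y)"
    using j by simp
  also have "\<dots> \<le> (\<Sum>z\<in>{z. E x z}. srw_step E x z * srw_prob E (2 * m) v0 v0)"
    by (intro sum_mono mult_left_mono srw_prob_even_le_diag srw_step_nonneg)
  also have "\<dots> = srw_prob E (2 * m) v0 v0"
    by (simp add: sum_srw_step flip: sum_distrib_right)
  finally show ?thesis using j by simp
qed

definition walk_ball :: "nat \<Rightarrow> 'v set" where
  "walk_ball n = (\<Union>j<n. walk_ends E v0 j)"

definition green_trunc :: "nat \<Rightarrow> 'v \<Rightarrow> real" where
  "green_trunc n y = (\<Sum>j<n. srw_prob E j v0 y)"

lemma finite_walk_ball: "finite (walk_ball n)"
  using finite_walk_ends[OF loc_fin] by (auto simp: walk_ball_def)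

lemma green_trunc_nonneg: "green_trunc n y \<ge> 0"
  by (auto simp: green_trunc_def intro!: sum_nonneg srw_prob_nonneg)

lemma green_trunc_eq_0: "y \<notin> walk_ball n \<Longrightarrow> green_trunc n y = 0"
  by (auto simp: green_trunc_def walk_ball_def intro!: sum.neutral srw_prob_eq_0)

lemma sum_srw_expect_eq:
  "(\<Sum>j<n. srw_expect E j h v0) = (\<Sum>y\<in>walk_ball n. green_trunc n y * h y)"
proof -
  have "(\<Sum>j<n. srw_expect E j h v0) = (\<Sum>j<n. \<Sum>y\<in>walk_ball n. srw_prob E j v0 y * h y)"
    by (intro sum.cong refl srw_expect_eq_sum[OF loc_fin finite_walk_ball])
      (auto simp: walk_ball_def)
  also have "\<dots> = (\<Sum>y\<in>walk_ball n. green_trunc n y * h y)"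
    by (subst sum.swap) (simp add: green_trunc_def sum_distrib_right)
  finally show ?thesis .
qed

text \<open>Since \<open>s - 1 \<le> -\<Delta>f = deg (f - P f)\<close> for the transition operator \<open>P\<close>, the sum of
  \<open>P\<^sup>j (s - 1) (v0)\<close> over \<open>j < n\<close> telescopes to at most \<open>deg (f v0 - P\<^sup>n f v0) \<le> deg f v0\<close>.\<close>
lemma stabilizing_weighted_sum_le:
  assumes f_nonneg: "\<And>x. f x \<ge> 0" and stab: "\<And>x. s x + laplacian E f x \<le> 1"
  shows "(\<Sum>y\<in>walk_ball n. green_trunc n y * (s y - 1)) \<le> real deg * f v0"
proof -
  have pointwise: "s y - 1 \<le> real deg * f y + (- real deg) * srw_expect E 1 f y" for y
    using stab[of y] laplacian_eq[of f y] by (simp add: algebra_simps)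
  have "(\<Sum>y\<in>walk_ball n. green_trunc n y * (s y - 1)) = (\<Sum>j<n. srw_expect E j (\<lambda>y. s y - 1) v0)"
    by (rule sum_srw_expect_eq[symmetric])
  also have "\<dots> \<le> (\<Sum>j<n. real deg * srw_expect E j f v0 + (- real deg) * srw_expect E (Suc j) f v0)"
  proof (rule sum_mono)
    fix j
    have "srw_expect E j (\<lambda>y. s y - 1) v0
        \<le> srw_expect E j (\<lambda>y. real deg * f y + (- real deg) * srw_expect E 1 f y) v0"
      by (rule srw_expect_mono) (rule pointwise)
    also have "\<dots> = real deg * srw_expect E j f v0 + (- real deg) * srw_expect E (j + 1) f v0"
      by (simp only: srw_expect_linear srw_expect_add)
    finally show "srw_expect E j (\<lambda>y. s y - 1) v0
        \<le> real deg * srw_expect E j f v0 + (- real deg) * srw_expect E (Suc j) f v0" by simp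
  qed
  also have "\<dots> = real deg * (\<Sum>j<n. srw_expect E j f v0 - srw_expect E (Suc j) f v0)"
    by (simp add: sum_distrib_left right_diff_distrib del: srw_expect.simps)
  also have "\<dots> = real deg * (f v0 - srw_expect E n f v0)"
    by (subst sum_lessThan_telescope') (simp del: srw_expect.simps add: srw_expect.simps(1))
  also have "\<dots> \<le> real deg * f v0"
    using srw_expect_nonneg[of f E n v0] f_nonneg by (simp add: mult_left_mono)
  finally show ?thesis .
qed

lemma green_trunc_le:
  assumes summable: "summable (\<lambda>j. srw_prob E j v0 v0)"
  shows "green_trunc n y \<le> 2 * green E v0 v0 + 1"
proof -
  let ?q = "\<lambda>j. srw_prob E j v0 v0"
  have partial: "(\<Sum>j<m. ?q j) \<le> green E v0 v0" for m
    unfolding green_def by (rule sum_le_suminf[OF summable]) (auto simp: srw_prob_nonneg)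
  have "green_trunc n y \<le> (\<Sum>j<n. ?q j + ?q (j - 1))"
    unfolding green_trunc_def
  proof (rule sum_mono)
    fix j :: nat
    have "2 * (j div 2) = j \<or> 2 * (j div 2) = j - 1" by presburger
    then have "?q (2 * (j div 2)) \<le> ?q j + ?q (j - 1)"
      using srw_prob_nonneg by (metis add_increasing add_increasing2 order.refl)
    then show "srw_prob E j v0 y \<le> ?q j + ?q (j - 1)"
      using srw_prob_le_diag[of j v0 y] by linarith
  qed
  also have "\<dots> \<le> green E v0 v0 + (green E v0 v0 + 1)"
  proof (cases n)
    case (Suc m)
    have "(\<Sum>j<n. ?q (j - 1)) = 1 + (\<Sum>j<m. ?q j)"
      unfolding Suc sum.lessThan_Suc_shift by simp
    then show ?thesis using partial[of n] partial[of m] by (simp add: sum.distrib)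
  qed (use partial[of 0] in simp)
  finally show ?thesis by simp
qed

lemma green_trunc_sq_unbounded:
  assumes transient: "\<forall>y. summable (\<lambda>j. srw_prob E j v0 y)"
    and not_sq_summable: "\<not> ((\<lambda>y. (green E v0 y)\<^sup>2) summable_on UNIV)"
  shows "\<exists>n. (\<Sum>y\<in>walk_ball n. (green_trunc n y)\<^sup>2) > C"
proof (rule ccontr)
  assume "\<not> ?thesis"
  then have bound: "(\<Sum>y\<in>walk_ball n. (green_trunc n y)\<^sup>2) \<le> C" for n
    by (simp add: not_less)
  have "(\<lambda>y. (green E v0 y)\<^sup>2) summable_on UNIV"
  proof (rule nonneg_bdd_above_summable_on)
    show "bdd_above (sum (\<lambda>y. (green E v0 y)\<^sup>2) ` {F. F \<subseteq> UNIV \<and> finite F})"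
    proof (rule bdd_aboveI2)
      fix F :: "'v set" assume "F \<in> {F. F \<subseteq> UNIV \<and> finite F}"
      then have fin: "finite F" by simp
      have lim: "(\<lambda>n. \<Sum>y\<in>F. (green_trunc n y)\<^sup>2) \<longlonglongrightarrow> (\<Sum>y\<in>F. (green E v0 y)\<^sup>2)"
        unfolding green_trunc_def green_def
        by (intro tendsto_sum tendsto_power summable_LIMSEQ) (use transient in auto)
      have "(\<Sum>y\<in>F. (green_trunc n y)\<^sup>2) \<le> C" for n
      proof -
        have "(\<Sum>y\<in>F. (green_trunc n y)\<^sup>2) = (\<Sum>y\<in>F \<inter> walk_ball n. (green_trunc n y)\<^sup>2)"
          by (rule sum.mono_neutral_right[OF fin]) (auto simp: green_trunc_eq_0)
        also have "\<dots> \<le> (\<Sum>y\<in>walk_ball n. (green_trunc n y)\<^sup>2)"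
          by (rule sum_mono2[OF finite_walk_ball]) auto
        finally show ?thesis using bound[of n] by simp
      qed
      then show "(\<Sum>y\<in>F. (green E v0 y)\<^sup>2) \<le> C"
        by (intro LIMSEQ_le_const2[OF lim]) auto
    qed
  qed simp
  with not_sq_summable show False by simp
qed

lemma stabilizes_imp_weighted_sums_bounded:
  assumes "stabilizes E s"
  shows "\<exists>K. \<forall>n. (\<Sum>y\<in>walk_ball n. green_trunc n y * (s y - 1)) \<le> K"
proof -
  obtain f where "\<forall>x. f x \<ge> 0" and "\<forall>x. s x + laplacian E f x \<le> 1"
    using assms by (auto simp: stabilizes_def)
  then have "(\<Sum>y\<in>walk_ball n. green_trunc n y * (s y - 1)) \<le> real deg * f v0" for n
    by (intro stabilizing_weighted_sum_le) auto
  then show ?thesis by blast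
qed

lemma reachable_in_walk_ends: "(x, y) \<in> {(u, v). E u v}\<^sup>* \<Longrightarrow> \<exists>j. y \<in> walk_ends E x j"
proof (induction rule: converse_rtrancl_induct)
  case base
  have "y \<in> walk_ends E y 0" by simp
  then show ?case by blast
next
  case (step x z)
  then obtain j where "y \<in> walk_ends E z j" by blast
  with step have "y \<in> walk_ends E x (Suc j)" by auto
  then show ?case by blast
qed

lemma countable_vertices: "countable (UNIV :: 'v set)"
proof -
  have "\<exists>j. y \<in> walk_ends E v0 j" for y
    using connected by (intro reachable_in_walk_ends) (simp add: connected_graph_def)
  then have "UNIV = (\<Union>j. walk_ends E v0 j)" by blast
  moreover have "countable (\<Union>j. walk_ends E v0 j)"
    by (rule countable_UN) (auto intro: countable_finite finite_walk_ends[OF loc_fin])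
  ultimately show ?thesis by simp
qed

end

lemma exp_quadratic_bounds:
  fixes u :: real
  assumes "\<bar>u\<bar> \<le> 1/2"
  shows "1 + u + u\<^sup>2 / 4 \<le> exp u" and "exp u \<le> 1 + u + u\<^sup>2"
proof -
  obtain t where t: "\<bar>t\<bar> \<le> \<bar>u\<bar>" and "exp u = (\<Sum>m<3. u ^ m / fact m) + exp t / fact 3 * u ^ 3"
    using Maclaurin_exp_le[of u 3] by blast
  then have taylor: "exp u = 1 + u + u\<^sup>2 / 2 + exp t / 6 * u ^ 3"
    by (simp add: numeral_3_eq_3 fact_numeral eval_nat_numeral)
  have "exp t \<le> exp (1/2)"
    using t assms by simp
  also have "\<dots> \<le> 2"
    using exp_bound_half[of "1/2::real"] by simp
  finally have "exp t / 6 \<le> 2 / 6" by simp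
  have "\<bar>exp t / 6 * u ^ 3\<bar> = exp t / 6 * (\<bar>u\<bar> * u\<^sup>2)"
    by (simp add: abs_mult power_abs power3_eq_cube power2_eq_square)
  also have "\<dots> \<le> 2 / 6 * (\<bar>u\<bar> * u\<^sup>2)"
    using \<open>exp t / 6 \<le> 2 / 6\<close> by (rule mult_right_mono) simp
  also have "\<dots> \<le> 2 / 6 * (1/2 * u\<^sup>2)"
    using assms by (intro mult_left_mono mult_right_mono) auto
  finally have "\<bar>exp t / 6 * u ^ 3\<bar> \<le> u\<^sup>2 / 6" by simp
  then show "1 + u + u\<^sup>2 / 4 \<le> exp u" and "exp u \<le> 1 + u + u\<^sup>2"
    using taylor zero_le_power2[of u] by (simp_all add: abs_le_iff)
qed

lemma one_plus_sum_le_prod: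
  fixes x :: "'a \<Rightarrow> real"
  assumes "finite U" and "\<And>y. y \<in> U \<Longrightarrow> 0 \<le> x y"
  shows "1 + (\<Sum>y\<in>U. x y) \<le> (\<Prod>y\<in>U. 1 + x y)"
  using assms
proof (induction U rule: finite_induct)
  case (insert a F)
  have "1 + sum x (insert a F) \<le> (1 + x a) * (1 + sum x F)"
    using insert by (simp add: algebra_simps sum_nonneg)
  also have "\<dots> \<le> (1 + x a) * prod (\<lambda>y. 1 + x y) F"
    using insert by (intro mult_left_mono) auto
  finally show ?case using insert by simp
qed simp

lemma sq_le_mult_if_quadratic_bound:
  fixes D P Q :: real
  assumes quad: "\<And>b. b > 0 \<Longrightarrow> 2 * b * D \<le> Q + b\<^sup>2 * P"
    and "D \<ge> 0" and "P \<ge> 0" and "Q \<ge> 0"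
  shows "D\<^sup>2 \<le> Q * P"
proof (cases "D = 0")
  case True
  then show ?thesis using \<open>P \<ge> 0\<close> \<open>Q \<ge> 0\<close> by simp
next
  case False
  then have "D > 0" using \<open>D \<ge> 0\<close> by simp
  show ?thesis
  proof (cases "P = 0")
    case True
    have "2 * (\<bar>Q\<bar> + 1) \<le> Q" using quad[of "(\<bar>Q\<bar> + 1) / D"] \<open>D > 0\<close> True by simp
    then show ?thesis by simp
  next
    case False
    then have "P > 0" using \<open>P \<ge> 0\<close> by simp
    then have "2 * D\<^sup>2 / P \<le> Q + D\<^sup>2 / P"
      using quad[of "D / P"] \<open>D > 0\<close> by (simp add: power2_eq_square field_simps)
    then show ?thesis using \<open>P > 0\<close> by (simp add: field_simps)
  qed
qed

lemma nat_bounded_iff_of_bounded_diff: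
  fixes f g :: "nat \<Rightarrow> real"
  assumes "\<And>n. \<bar>f n - g n\<bar> \<le> C"
  shows "(\<exists>K::nat. \<forall>n. f n \<le> real K) \<longleftrightarrow> (\<exists>K::nat. \<forall>n. g n \<le> real K)"
proof -
  have shift: "\<exists>K'::nat. \<forall>n. h' n \<le> real K'"
    if "\<forall>n. h n \<le> real K" and "\<forall>n. h' n \<le> h n + C" for h h' :: "nat \<Rightarrow> real" and K :: nat
  proof (intro exI allI)
    fix n
    show "h' n \<le> real (nat \<lceil>real K + C\<rceil>)"
      using that(1)[rule_format, of n] that(2)[rule_format, of n] by linarith
  qed
  have "g n \<le> f n + C" and "f n \<le> g n + C" for n
    using assms[of n] by (simp_all add: abs_le_iff)
  then show ?thesis using shift[of f _ g] shift[of g _ f] by auto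
qed

context prob_space
begin

text \<open>A Paley--Zygmund type bound; Cauchy--Schwarz for \<open>\<int>\<^sub>A X\<close> is obtained by optimising
  the pointwise inequality \<open>2 b 1\<^sub>A X \<le> X\<^sup>2 + b\<^sup>2 1\<^sub>A\<close> over \<open>b\<close>.\<close>
lemma second_moment_tail_bound:
  fixes X :: "'a \<Rightarrow> real"
  assumes A: "A \<in> events" and X: "integrable M X" and X2: "integrable M (\<lambda>\<omega>. (X \<omega>)\<^sup>2)"
    and outside: "\<And>\<omega>. \<omega> \<in> space M - A \<Longrightarrow> X \<omega> \<le> a"
    and "0 \<le> a" and "a \<le> expectation X"
  shows "(expectation X - a)\<^sup>2 \<le> expectation (\<lambda>\<omega>. (X \<omega>)\<^sup>2) * prob A"
proof -
  have iA: "integrable M (indicator A :: 'a \<Rightarrow> real)"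
    using A by (simp add: integrable_indicator_iff emeasure_eq_measure)
  have iAX: "integrable M (\<lambda>\<omega>. indicator A \<omega> * X \<omega>)"
    using integrable_mult_indicator[OF A X] by simp
  define D where "D = expectation (\<lambda>\<omega>. indicator A \<omega> * X \<omega>)"
  have "integrable M (\<lambda>\<omega>. a + indicator A \<omega> * X \<omega>)"
    using iAX by simp
  then have "expectation X \<le> expectation (\<lambda>\<omega>. a + indicator A \<omega> * X \<omega>)"
    using outside \<open>0 \<le> a\<close> by (intro integral_mono X) (auto simp: indicator_def)
  then have excess: "expectation X - a \<le> D"
    using iAX by (simp add: D_def prob_space)
  have "2 * b * D \<le> expectation (\<lambda>\<omega>. (X \<omega>)\<^sup>2) + b\<^sup>2 * prob A" for b
  proof -
    have "2 * b * D = expectation (\<lambda>\<omega>. 2 * b * (indicator A \<omega> * X \<omega>))"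
      by (simp add: D_def)
    also have "\<dots> \<le> expectation (\<lambda>\<omega>. (X \<omega>)\<^sup>2 + b\<^sup>2 * indicator A \<omega>)"
    proof (intro integral_mono)
      fix \<omega>
      show "2 * b * (indicator A \<omega> * X \<omega>) \<le> (X \<omega>)\<^sup>2 + b\<^sup>2 * indicator A \<omega>"
        using sum_squares_bound[of b "X \<omega>"] by (cases "\<omega> \<in> A") (simp_all add: add.commute)
    qed (use iAX iA X2 in auto)
    also have "\<dots> = expectation (\<lambda>\<omega>. (X \<omega>)\<^sup>2) + b\<^sup>2 * prob A"
      using iA X2 A by (simp add: emeasure_eq_measure)
    finally show ?thesis .
  qed
  then have "D\<^sup>2 \<le> expectation (\<lambda>\<omega>. (X \<omega>)\<^sup>2) * prob A"
    using excess \<open>a \<le> expectation X\<close> by (intro sq_le_mult_if_quadratic_bound) auto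
  moreover have "(expectation X - a)\<^sup>2 \<le> D\<^sup>2"
    using excess \<open>a \<le> expectation X\<close> by (intro power_mono) auto
  ultimately show ?thesis by linarith
qed

lemma exp_moment_bounds:
  fixes X :: "'a \<Rightarrow> real"
  assumes [measurable]: "X \<in> borel_measurable M" and small: "\<And>\<omega>. \<omega> \<in> space M \<Longrightarrow> \<bar>X \<omega>\<bar> \<le> 1/2"
  shows "integrable M (\<lambda>\<omega>. exp (X \<omega>))"
    and "1 + expectation X + expectation (\<lambda>\<omega>. (X \<omega>)\<^sup>2) / 4 \<le> expectation (\<lambda>\<omega>. exp (X \<omega>))"
    and "expectation (\<lambda>\<omega>. exp (X \<omega>)) \<le> 1 + expectation X + expectation (\<lambda>\<omega>. (X \<omega>)\<^sup>2)"
proof -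
  have iX: "integrable M X"
    using small by (intro integrable_const_bound[where B="1/2"]) auto
  have iX2: "integrable M (\<lambda>\<omega>. (X \<omega>)\<^sup>2)"
  proof (intro integrable_const_bound[where B="1"] AE_I2)
    show "norm ((X \<omega>)\<^sup>2) \<le> 1" if "\<omega> \<in> space M" for \<omega>
      using small[OF that] by (simp add: abs_square_le_1)
  qed simp
  show iexp: "integrable M (\<lambda>\<omega>. exp (X \<omega>))"
  proof (intro integrable_const_bound[where B="exp (1/2)"] AE_I2)
    show "norm (exp (X \<omega>)) \<le> exp (1/2)" if "\<omega> \<in> space M" for \<omega>
      using small[OF that] by simp
  qed simp
  have "expectation (\<lambda>\<omega>. 1 + X \<omega> + (X \<omega>)\<^sup>2 / 4) \<le> expectation (\<lambda>\<omega>. exp (X \<omega>))"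
    using exp_quadratic_bounds(1)[OF small] by (intro integral_mono iexp) (auto simp: iX iX2)
  then show "1 + expectation X + expectation (\<lambda>\<omega>. (X \<omega>)\<^sup>2) / 4 \<le> expectation (\<lambda>\<omega>. exp (X \<omega>))"
    using iX iX2 by (simp add: prob_space)
  have "expectation (\<lambda>\<omega>. exp (X \<omega>)) \<le> expectation (\<lambda>\<omega>. 1 + X \<omega> + (X \<omega>)\<^sup>2)"
    using exp_quadratic_bounds(2)[OF small] by (intro integral_mono iexp) (auto simp: iX iX2)
  then show "expectation (\<lambda>\<omega>. exp (X \<omega>)) \<le> 1 + expectation X + expectation (\<lambda>\<omega>. (X \<omega>)\<^sup>2)"
    using iX iX2 by (simp add: prob_space)
qed

lemma indep_vars_measurable:
  "indep_vars (\<lambda>_. borel) Y U \<Longrightarrow> y \<in> U \<Longrightarrow> Y y \<in> borel_measurable M"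
  by (auto simp: indep_vars_def)

lemma indep_sum_second_moment:
  fixes Y :: "'i \<Rightarrow> 'a \<Rightarrow> real"
  assumes indep: "indep_vars (\<lambda>_. borel) Y U" and U: "finite U"
    and sq_int: "\<And>y. y \<in> U \<Longrightarrow> integrable M (\<lambda>\<omega>. (Y y \<omega>)\<^sup>2)"
    and mean0: "\<And>y. y \<in> U \<Longrightarrow> expectation (Y y) = 0"
    and second: "\<And>y. y \<in> U \<Longrightarrow> expectation (\<lambda>\<omega>. (Y y \<omega>)\<^sup>2) = v"
  shows "integrable M (\<lambda>\<omega>. (\<Sum>y\<in>U. b y * Y y \<omega>)\<^sup>2)"
    and "expectation (\<lambda>\<omega>. (\<Sum>y\<in>U. b y * Y y \<omega>)\<^sup>2) = (\<Sum>y\<in>U. (b y)\<^sup>2) * v"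
proof -
  have int: "integrable M (Y y)" if "y \<in> U" for y
    using indep_vars_measurable[OF indep that] sq_int[OF that]
    by (rule square_integrable_imp_integrable)
  have cross: "integrable M (\<lambda>\<omega>. Y y \<omega> * Y z \<omega>) \<and>
      expectation (\<lambda>\<omega>. Y y \<omega> * Y z \<omega>) = (if y = z then v else 0)" if "y \<in> U" "z \<in> U" for y z
  proof (cases "y = z")
    case True
    then show ?thesis using sq_int[OF that(1)] second[OF that(1)] by (simp add: power2_eq_square)
  next
    case False
    have pair: "indep_vars (\<lambda>_. borel) Y {y, z}"
      by (rule indep_vars_subset[OF indep]) (use that in auto)
    have "integrable M (\<lambda>\<omega>. \<Prod>i\<in>{y, z}. Y i \<omega>)"
      and "expectation (\<lambda>\<omega>. \<Prod>i\<in>{y, z}. Y i \<omega>) = (\<Prod>i\<in>{y, z}. expectation (Y i))"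
      using indep_vars_integrable[OF _ pair] indep_vars_lebesgue_integral[OF _ pair] int that by auto
    then show ?thesis using False mean0[OF that(1)] by simp
  qed
  have square: "(\<Sum>y\<in>U. b y * Y y \<omega>)\<^sup>2 = (\<Sum>y\<in>U. \<Sum>z\<in>U. b y * b z * (Y y \<omega> * Y z \<omega>))" for \<omega>
    by (simp add: power2_eq_square sum_product mult_ac)
  show "integrable M (\<lambda>\<omega>. (\<Sum>y\<in>U. b y * Y y \<omega>)\<^sup>2)"
    unfolding square using cross by (intro Bochner_Integration.integrable_sum integrable_mult_right) auto
  have "expectation (\<lambda>\<omega>. (\<Sum>y\<in>U. b y * Y y \<omega>)\<^sup>2)
      = (\<Sum>y\<in>U. \<Sum>z\<in>U. b y * b z * expectation (\<lambda>\<omega>. Y y \<omega> * Y z \<omega>))"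
    unfolding square using cross
    by (simp add: Bochner_Integration.integral_sum Bochner_Integration.integrable_sum)
  also have "\<dots> = (\<Sum>y\<in>U. \<Sum>z\<in>U. if y = z then b y * b z * v else 0)"
    using cross by (intro sum.cong refl) simp
  also have "\<dots> = (\<Sum>y\<in>U. (b y)\<^sup>2 * v)"
    using U by (simp add: power2_eq_square)
  finally show "expectation (\<lambda>\<omega>. (\<Sum>y\<in>U. b y * Y y \<omega>)\<^sup>2) = (\<Sum>y\<in>U. (b y)\<^sup>2) * v"
    by (simp add: sum_distrib_right)
qed

lemma indep_sum_exp_moment_bounds:
  fixes Y :: "'i \<Rightarrow> 'a \<Rightarrow> real"
  assumes indep: "indep_vars (\<lambda>_. borel) Y U" and U: "finite U"
    and bounded: "\<And>y \<omega>. y \<in> U \<Longrightarrow> \<omega> \<in> space M \<Longrightarrow> \<bar>Y y \<omega>\<bar> \<le> B"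
    and mean0: "\<And>y. y \<in> U \<Longrightarrow> expectation (Y y) = 0"
    and second: "\<And>y. y \<in> U \<Longrightarrow> expectation (\<lambda>\<omega>. (Y y \<omega>)\<^sup>2) = v"
    and small: "\<And>y. y \<in> U \<Longrightarrow> \<bar>c y\<bar> * B \<le> 1/2"
  shows "integrable M (\<lambda>\<omega>. exp (\<Sum>y\<in>U. c y * Y y \<omega>))"
    and "1 + (\<Sum>y\<in>U. (c y)\<^sup>2) * v / 4 \<le> expectation (\<lambda>\<omega>. exp (\<Sum>y\<in>U. c y * Y y \<omega>))"
    and "expectation (\<lambda>\<omega>. exp (\<Sum>y\<in>U. c y * Y y \<omega>)) \<le> exp ((\<Sum>y\<in>U. (c y)\<^sup>2) * v)"
proof -
  have meas[measurable]: "Y y \<in> borel_measurable M" if "y \<in> U" for y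
    using indep that by (rule indep_vars_measurable)
  have scaled_small: "\<bar>c y * Y y \<omega>\<bar> \<le> 1/2" if "y \<in> U" "\<omega> \<in> space M" for y \<omega>
    using mult_left_mono[OF bounded[OF that], of "\<bar>c y\<bar>"] small[OF that(1)] by (simp add: abs_mult)
  have iY: "integrable M (Y y)" if "y \<in> U" for y
    using that by (intro integrable_const_bound[where B=B] AE_I2) (auto simp: bounded)
  have factor_bounds: "integrable M (\<lambda>\<omega>. exp (c y * Y y \<omega>)) \<and>
      1 + (c y)\<^sup>2 * v / 4 \<le> expectation (\<lambda>\<omega>. exp (c y * Y y \<omega>)) \<and>
      expectation (\<lambda>\<omega>. exp (c y * Y y \<omega>)) \<le> exp ((c y)\<^sup>2 * v)" if y: "y \<in> U" for y
  proof -
    have meas_y: "(\<lambda>\<omega>. c y * Y y \<omega>) \<in> borel_measurable M"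
      using meas[OF y] by simp
    have small_y: "\<And>\<omega>. \<omega> \<in> space M \<Longrightarrow> \<bar>c y * Y y \<omega>\<bar> \<le> 1/2"
      using scaled_small[OF y] .
    note moments = exp_moment_bounds[OF meas_y small_y]
    have "expectation (\<lambda>\<omega>. c y * Y y \<omega>) = 0" and "expectation (\<lambda>\<omega>. (c y * Y y \<omega>)\<^sup>2) = (c y)\<^sup>2 * v"
      using mean0[OF y] second[OF y] by (simp_all add: power_mult_distrib)
    moreover have "1 + (c y)\<^sup>2 * v \<le> exp ((c y)\<^sup>2 * v)" by (rule exp_ge_add_one_self)
    ultimately show ?thesis
      using moments by (intro conjI) linarith+
  qed
  have indep_exp: "indep_vars (\<lambda>_. borel) (\<lambda>y \<omega>. exp (c y * Y y \<omega>)) U"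
    by (rule indep_vars_compose2[OF indep]) simp
  have prod_eq: "exp (\<Sum>y\<in>U. c y * Y y \<omega>) = (\<Prod>y\<in>U. exp (c y * Y y \<omega>))" for \<omega>
    by (simp add: exp_sum[OF U])
  have E_prod: "expectation (\<lambda>\<omega>. exp (\<Sum>y\<in>U. c y * Y y \<omega>)) = (\<Prod>y\<in>U. expectation (\<lambda>\<omega>. exp (c y * Y y \<omega>)))"
    unfolding prod_eq using factor_bounds by (intro indep_vars_lebesgue_integral[OF U indep_exp]) auto
  show "integrable M (\<lambda>\<omega>. exp (\<Sum>y\<in>U. c y * Y y \<omega>))"
    unfolding prod_eq using factor_bounds by (intro indep_vars_integrable[OF U indep_exp]) auto
  have v_nonneg: "0 \<le> v" if "y \<in> U" for y
    using second[OF that] integral_nonneg_AE[of "\<lambda>\<omega>. (Y y \<omega>)\<^sup>2" M] by simp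
  have "1 + (\<Sum>y\<in>U. (c y)\<^sup>2) * v / 4 = 1 + (\<Sum>y\<in>U. (c y)\<^sup>2 * v / 4)"
    by (simp add: sum_distrib_right sum_divide_distrib)
  also have "\<dots> \<le> (\<Prod>y\<in>U. 1 + (c y)\<^sup>2 * v / 4)"
    using v_nonneg by (intro one_plus_sum_le_prod U) auto
  also have "\<dots> \<le> expectation (\<lambda>\<omega>. exp (\<Sum>y\<in>U. c y * Y y \<omega>))"
    unfolding E_prod using factor_bounds v_nonneg by (intro prod_mono) simp
  finally show "1 + (\<Sum>y\<in>U. (c y)\<^sup>2) * v / 4 \<le> expectation (\<lambda>\<omega>. exp (\<Sum>y\<in>U. c y * Y y \<omega>))" .
  have "expectation (\<lambda>\<omega>. exp (\<Sum>y\<in>U. c y * Y y \<omega>)) \<le> (\<Prod>y\<in>U. exp ((c y)\<^sup>2 * v))"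
    unfolding E_prod
  proof (intro prod_mono conjI)
    fix y assume y: "y \<in> U"
    have "0 \<le> (c y)\<^sup>2 * v / 4" using v_nonneg[OF y] by simp
    then show "0 \<le> expectation (\<lambda>\<omega>. exp (c y * Y y \<omega>))" using factor_bounds[OF y] by linarith
  qed (use factor_bounds in auto)
  also have "\<dots> = exp ((\<Sum>y\<in>U. (c y)\<^sup>2) * v)"
    by (simp add: exp_sum[OF U] sum_distrib_right)
  finally show "expectation (\<lambda>\<omega>. exp (\<Sum>y\<in>U. c y * Y y \<omega>)) \<le> exp ((\<Sum>y\<in>U. (c y)\<^sup>2) * v)" .
qed

lemma indep_sets_reindex_inj:
  assumes indep: "indep_sets F UNIV" and "inj e"
  shows "indep_sets (\<lambda>i. F (e i)) UNIV"
  unfolding indep_sets_def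
proof (intro conjI ballI allI impI)
  fix i show "F (e i) \<subseteq> events" using indep by (auto simp: indep_sets_def)
next
  fix J A assume J: "J \<subseteq> UNIV" "J \<noteq> {}" "finite J" and A: "A \<in> Pi J (\<lambda>i. F (e i))"
  define A' where "A' y = A (inv e y)" for y
  have "A' \<in> Pi (e ` J) F" using A \<open>inj e\<close> by (auto simp: A'_def)
  then have "prob (\<Inter>j\<in>e ` J. A' j) = (\<Prod>j\<in>e ` J. prob (A' j))"
    using indep J unfolding indep_sets_def by (metis finite_imageI image_is_empty subset_UNIV)
  moreover have "(\<Inter>j\<in>e ` J. A' j) = (\<Inter>j\<in>J. A j)" using \<open>inj e\<close> by (auto simp: A'_def)
  moreover have "(\<Prod>j\<in>e ` J. prob (A' j)) = (\<Prod>j\<in>J. prob (A j))"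
    using \<open>inj e\<close> by (subst prod.reindex) (auto simp: A'_def inj_on_def)
  ultimately show "prob (\<Inter>j\<in>J. A j) = (\<Prod>j\<in>J. prob (A j))" by simp
qed

end

section \<open>Weighted sums of an i.i.d. field\<close>

text \<open>The deviation \<open>u - 1\<close> is split at level \<open>L\<close>: the bounded part has exponential
  moments, while the tail part is small in \<open>L\<^sup>2\<close> and is controlled by Chebyshev's inequality.\<close>

definition trunc_dev :: "real \<Rightarrow> real \<Rightarrow> real" where
  "trunc_dev L u = (if \<bar>u - 1\<bar> \<le> L then u - 1 else 0)"

definition tail_dev :: "real \<Rightarrow> real \<Rightarrow> real" where
  "tail_dev L u = (if \<bar>u - 1\<bar> \<le> L then 0 else u - 1)"

lemma trunc_dev_measurable [measurable]: "trunc_dev L \<in> borel_measurable borel"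
  unfolding trunc_dev_def by measurable

lemma tail_dev_measurable [measurable]: "tail_dev L \<in> borel_measurable borel"
  unfolding tail_dev_def by measurable

lemma trunc_dev_plus_tail_dev: "trunc_dev L u + tail_dev L u = u - 1"
  by (simp add: trunc_dev_def tail_dev_def)

lemma trunc_dev_sq_plus_tail_dev_sq: "(trunc_dev L u)\<^sup>2 + (tail_dev L u)\<^sup>2 = (u - 1)\<^sup>2"
  by (simp add: trunc_dev_def tail_dev_def)

lemma abs_trunc_dev_le: "\<bar>trunc_dev L u\<bar> \<le> \<bar>L\<bar>"
  by (simp add: trunc_dev_def)

lemma tail_dev_sq_le: "(tail_dev L u)\<^sup>2 \<le> (u - 1)\<^sup>2"
  by (simp add: tail_dev_def)

locale iid_unit_mean = prob_space M for M :: "'w measure" +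
  fixes s :: "'v \<Rightarrow> 'w \<Rightarrow> real" and v0 :: 'v
  assumes s_measurable [measurable]: "\<And>x. s x \<in> borel_measurable M"
    and s_indep: "indep_vars (\<lambda>_. borel) s UNIV"
    and s_distr: "\<And>x. distr M borel (s x) = distr M borel (s v0)"
    and s_integrable: "integrable M (s v0)" and s_mean: "expectation (s v0) = 1"
    and s_sq_integrable: "integrable M (\<lambda>\<omega>. (s v0 \<omega>)\<^sup>2)"
    and s_variance_pos: "variance (s v0) > 0"
begin

lemma integrable_comp_iff:
  fixes g :: "real \<Rightarrow> real"
  assumes [measurable]: "g \<in> borel_measurable borel"
  shows "integrable M (\<lambda>\<omega>. g (s y \<omega>)) \<longleftrightarrow> integrable M (\<lambda>\<omega>. g (s v0 \<omega>))"
  using integrable_distr_eq[of "s y" M borel g] integrable_distr_eq[of "s v0" M borel g] s_distr[of y]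
  by simp

lemma expectation_comp:
  fixes g :: "real \<Rightarrow> real"
  assumes [measurable]: "g \<in> borel_measurable borel"
  shows "expectation (\<lambda>\<omega>. g (s y \<omega>)) = expectation (\<lambda>\<omega>. g (s v0 \<omega>))"
  using integral_distr[of "s y" M borel g] integral_distr[of "s v0" M borel g] s_distr[of y] by simp

lemma indep_vars_comp:
  fixes g :: "real \<Rightarrow> real"
  assumes "g \<in> borel_measurable borel"
  shows "indep_vars (\<lambda>_. borel) (\<lambda>y \<omega>. g (s y \<omega>)) U"
proof -
  have "indep_vars (\<lambda>_. borel) (\<lambda>y \<omega>. g (s y \<omega>)) UNIV"
    by (rule indep_vars_compose2[OF s_indep]) (use assms in simp)
  then show ?thesis by (rule indep_vars_subset) simp
qed

definition trunc_mean :: "real \<Rightarrow> real" where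
  "trunc_mean L = expectation (\<lambda>\<omega>. trunc_dev L (s v0 \<omega>))"

definition tail_mean :: "real \<Rightarrow> real" where
  "tail_mean L = expectation (\<lambda>\<omega>. tail_dev L (s v0 \<omega>))"

definition tail_moment :: "real \<Rightarrow> real" where
  "tail_moment L = expectation (\<lambda>\<omega>. (tail_dev L (s v0 \<omega>))\<^sup>2)"

definition trunc_centred :: "real \<Rightarrow> real \<Rightarrow> real" where
  "trunc_centred L u = trunc_dev L u - trunc_mean L"

definition tail_centred :: "real \<Rightarrow> real \<Rightarrow> real" where
  "tail_centred L u = tail_dev L u - tail_mean L"

lemma trunc_centred_measurable [measurable]: "trunc_centred L \<in> borel_measurable borel"
  unfolding trunc_centred_def by measurable

lemma tail_centred_measurable [measurable]: "tail_centred L \<in> borel_measurable borel"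
  unfolding tail_centred_def by measurable

lemma integrable_dev_sq: "integrable M (\<lambda>\<omega>. (s v0 \<omega> - 1)\<^sup>2)"
  using s_integrable s_sq_integrable by (simp add: power2_diff)

lemma variance_eq_dev_sq: "variance (s v0) = expectation (\<lambda>\<omega>. (s v0 \<omega> - 1)\<^sup>2)"
  using s_mean by simp

lemma integrable_trunc_dev: "integrable M (\<lambda>\<omega>. trunc_dev L (s v0 \<omega>))"
  by (rule integrable_const_bound[where B="\<bar>L\<bar>"]) (auto simp: abs_trunc_dev_le)

lemma integrable_trunc_dev_sq: "integrable M (\<lambda>\<omega>. (trunc_dev L (s v0 \<omega>))\<^sup>2)"
  by (rule integrable_const_bound[where B="L\<^sup>2"])
    (auto simp: abs_le_square_iff[THEN iffD1, OF abs_trunc_dev_le[THEN order_trans]])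

lemma integrable_tail_dev_sq: "integrable M (\<lambda>\<omega>. (tail_dev L (s v0 \<omega>))\<^sup>2)"
  by (rule Bochner_Integration.integrable_bound[OF integrable_dev_sq]) (auto simp: tail_dev_sq_le)

lemma integrable_tail_dev: "integrable M (\<lambda>\<omega>. tail_dev L (s v0 \<omega>))"
  by (rule square_integrable_imp_integrable[OF _ integrable_tail_dev_sq]) simp

lemma trunc_mean_plus_tail_mean: "trunc_mean L + tail_mean L = 0"
proof -
  have "trunc_mean L + tail_mean L = expectation (\<lambda>\<omega>. s v0 \<omega> - 1)"
    using integrable_trunc_dev integrable_tail_dev
    by (simp add: trunc_mean_def tail_mean_def trunc_dev_plus_tail_dev flip: Bochner_Integration.integral_add)
  also have "\<dots> = 0" using s_integrable s_mean by (simp add: prob_space)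
  finally show ?thesis .
qed

lemma trunc_centred_plus_tail_centred: "trunc_centred L u + tail_centred L u = u - 1"
  using trunc_dev_plus_tail_dev[of L u] trunc_mean_plus_tail_mean[of L]
  by (simp add: trunc_centred_def tail_centred_def)

lemma abs_trunc_centred_le:
  assumes "L \<ge> 0"
  shows "\<bar>trunc_centred L u\<bar> \<le> 2 * L"
proof -
  have "\<bar>trunc_mean L\<bar> \<le> expectation (\<lambda>\<omega>. \<bar>trunc_dev L (s v0 \<omega>)\<bar>)"
    unfolding trunc_mean_def using integral_norm_bound[of M "\<lambda>\<omega>. trunc_dev L (s v0 \<omega>)"] by simp
  also have "\<dots> \<le> expectation (\<lambda>\<omega>. \<bar>L\<bar>)"
    using integrable_trunc_dev by (intro integral_mono) (auto simp: abs_trunc_dev_le)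
  finally show ?thesis
    using abs_trunc_dev_le[of L u] assms by (simp add: trunc_centred_def prob_space abs_le_iff)
qed

lemma trunc_centred_mean: "expectation (\<lambda>\<omega>. trunc_centred L (s v0 \<omega>)) = 0"
  using integrable_trunc_dev by (simp add: trunc_centred_def trunc_mean_def prob_space)

lemma tail_centred_mean: "expectation (\<lambda>\<omega>. tail_centred L (s v0 \<omega>)) = 0"
  using integrable_tail_dev by (simp add: tail_centred_def tail_mean_def prob_space)

lemma trunc_centred_second_moment:
  "expectation (\<lambda>\<omega>. (trunc_centred L (s v0 \<omega>))\<^sup>2)
    = expectation (\<lambda>\<omega>. (trunc_dev L (s v0 \<omega>))\<^sup>2) - (trunc_mean L)\<^sup>2"
  using variance_eq[OF integrable_trunc_dev integrable_trunc_dev_sq]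
  by (simp add: trunc_centred_def trunc_mean_def)

lemma tail_centred_second_moment_le:
  "expectation (\<lambda>\<omega>. (tail_centred L (s v0 \<omega>))\<^sup>2) \<le> tail_moment L"
  using variance_eq[OF integrable_tail_dev integrable_tail_dev_sq]
  by (simp add: tail_centred_def tail_mean_def tail_moment_def)

lemma integrable_tail_centred_sq: "integrable M (\<lambda>\<omega>. (tail_centred L (s v0 \<omega>))\<^sup>2)"
  using integrable_tail_dev integrable_tail_dev_sq by (simp add: tail_centred_def power2_diff)

lemma trunc_centred_second_moment_bounds:
  "variance (s v0) - 2 * tail_moment L \<le> expectation (\<lambda>\<omega>. (trunc_centred L (s v0 \<omega>))\<^sup>2)"
  "expectation (\<lambda>\<omega>. (trunc_centred L (s v0 \<omega>))\<^sup>2) \<le> variance (s v0)"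
proof -
  have "variance (s v0) = expectation (\<lambda>\<omega>. (trunc_dev L (s v0 \<omega>))\<^sup>2 + (tail_dev L (s v0 \<omega>))\<^sup>2)"
    unfolding variance_eq_dev_sq trunc_dev_sq_plus_tail_dev_sq ..
  then have split: "variance (s v0) = expectation (\<lambda>\<omega>. (trunc_dev L (s v0 \<omega>))\<^sup>2) + tail_moment L"
    using integrable_trunc_dev_sq integrable_tail_dev_sq by (simp add: tail_moment_def)
  have "(trunc_mean L)\<^sup>2 = (tail_mean L)\<^sup>2"
    using trunc_mean_plus_tail_mean[of L] by (simp add: eq_neg_iff_add_eq_0[symmetric])
  moreover have "(tail_mean L)\<^sup>2 \<le> tail_moment L"
    using variance_positive[of "\<lambda>\<omega>. tail_dev L (s v0 \<omega>)"]
      variance_eq[OF integrable_tail_dev integrable_tail_dev_sq]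
    by (simp add: tail_mean_def tail_moment_def)
  ultimately show "variance (s v0) - 2 * tail_moment L \<le> expectation (\<lambda>\<omega>. (trunc_centred L (s v0 \<omega>))\<^sup>2)"
    and "expectation (\<lambda>\<omega>. (trunc_centred L (s v0 \<omega>))\<^sup>2) \<le> variance (s v0)"
    using split trunc_centred_second_moment[of L] zero_le_power2[of "tail_mean L"] by linarith+
qed

lemma tail_moment_small: "e > 0 \<Longrightarrow> \<exists>L\<ge>1. tail_moment L \<le> e"
proof -
  assume "e > 0"
  let ?f = "\<lambda>i \<omega>. (tail_dev (real i) (s v0 \<omega>))\<^sup>2"
  have "(\<lambda>i. expectation (?f i)) \<longlonglongrightarrow> expectation (\<lambda>\<omega>. 0)"
  proof (rule integral_dominated_convergence[where w="\<lambda>\<omega>. (s v0 \<omega> - 1)\<^sup>2"])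
    show "AE \<omega> in M. (\<lambda>i. ?f i \<omega>) \<longlonglongrightarrow> 0"
    proof (rule AE_I2)
      fix \<omega>
      have "eventually (\<lambda>i. ?f i \<omega> = 0) sequentially"
      proof (rule eventually_sequentiallyI[of "nat \<lceil>\<bar>s v0 \<omega> - 1\<bar>\<rceil>"])
        fix i assume "nat \<lceil>\<bar>s v0 \<omega> - 1\<bar>\<rceil> \<le> i"
        then show "?f i \<omega> = 0" by (simp add: tail_dev_def)
      qed
      then show "(\<lambda>i. ?f i \<omega>) \<longlonglongrightarrow> 0" by (rule tendsto_eventually)
    qed
  qed (use integrable_dev_sq in \<open>auto simp: tail_dev_sq_le\<close>)
  then have "(\<lambda>i. tail_moment (real i)) \<longlonglongrightarrow> 0" by (simp add: tail_moment_def)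
  then obtain N where "\<And>i. i \<ge> N \<Longrightarrow> \<bar>tail_moment (real i)\<bar> < e"
    using \<open>e > 0\<close> by (metis LIMSEQ_D real_norm_def diff_zero)
  from this[of "max N 1"] show ?thesis by (intro exI[of _ "real (max N 1)"]) auto
qed

lemma trunc_sum_exceeds_with_positive_prob:
  fixes a :: "'v \<Rightarrow> real"
  assumes "L > 0" and tail_small: "tail_moment L \<le> variance (s v0) / 4"
    and U: "finite U" and V_pos: "(\<Sum>y\<in>U. (a y)\<^sup>2) > 0"
    and coeff_small: "\<And>y. y \<in> U \<Longrightarrow> 8 * L * \<bar>a y\<bar> \<le> sqrt (\<Sum>y\<in>U. (a y)\<^sup>2)"
  shows "(variance (s v0))\<^sup>2 * exp (- 4 * variance (s v0)) / 256
    \<le> prob {\<omega>\<in>space M. ln (1 + variance (s v0) / 16) * sqrt (\<Sum>y\<in>U. (a y)\<^sup>2)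
                          < (\<Sum>y\<in>U. a y * trunc_centred L (s y \<omega>))}"
    (is "_ \<le> prob ?A")
proof -
  define \<sigma> where "\<sigma> = variance (s v0)"
  define \<rho> where "\<rho> = expectation (\<lambda>\<omega>. (trunc_centred L (s v0 \<omega>))\<^sup>2)"
  define r where "r = sqrt (\<Sum>y\<in>U. (a y)\<^sup>2)"
  define c where "c y = a y / r" for y
  define Y where "Y y \<omega> = trunc_centred L (s y \<omega>)" for y \<omega>
  have \<sigma>_pos: "\<sigma> > 0" using s_variance_pos by (simp add: \<sigma>_def)
  have \<rho>_bounds: "\<sigma> / 2 \<le> \<rho>" "\<rho> \<le> \<sigma>"
    using trunc_centred_second_moment_bounds[of L] tail_small by (simp_all add: \<sigma>_def \<rho>_def)
  have r_pos: "r > 0" using V_pos by (simp add: r_def)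
  have c_sq_sum: "(\<Sum>y\<in>U. (c y)\<^sup>2) = 1" and c2_sq_sum: "(\<Sum>y\<in>U. (2 * c y)\<^sup>2) = 4"
    using V_pos r_pos
    by (simp_all add: c_def r_def power_divide power_mult_distrib flip: sum_divide_distrib sum_distrib_left)
  have c_small: "\<bar>2 * c y\<bar> * (2 * L) \<le> 1/2" if "y \<in> U" for y
    using coeff_small[OF that] r_pos by (simp add: c_def r_def abs_mult field_simps)
  have indep: "indep_vars (\<lambda>_. borel) Y U"
    unfolding Y_def by (rule indep_vars_comp) simp
  have Y_bounded: "\<bar>Y y \<omega>\<bar> \<le> 2 * L" for y \<omega>
    unfolding Y_def using \<open>L > 0\<close> by (simp add: abs_trunc_centred_le)
  have Y_mean: "expectation (Y y) = 0" for y
    unfolding Y_def by (subst expectation_comp) (simp_all add: trunc_centred_mean)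
  have Y_second: "expectation (\<lambda>\<omega>. (Y y \<omega>)\<^sup>2) = \<rho>" for y
    unfolding Y_def \<rho>_def by (rule expectation_comp) simp
  note exp_bounds = indep_sum_exp_moment_bounds[OF indep U Y_bounded Y_mean Y_second]
  txt \<open>For \<open>X = exp (T / r)\<close> with \<open>T\<close> the truncated sum: \<open>E X \<ge> 1 + \<sigma>/8\<close> and
    \<open>E X\<^sup>2 \<le> exp (4\<sigma>)\<close>, so the tail bound at level \<open>1 + \<sigma>/16\<close> gives probability
    at least \<open>(\<sigma>/16)\<^sup>2 exp (-4\<sigma>)\<close>.\<close>
  have c_small1: "\<bar>c y\<bar> * (2 * L) \<le> 1/2" if "y \<in> U" for y
    using c_small[OF that] \<open>L > 0\<close> by (simp add: abs_mult)
  define X where "X = (\<lambda>\<omega>. exp (\<Sum>y\<in>U. c y * Y y \<omega>))"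
  have X_sq: "(X \<omega>)\<^sup>2 = exp (\<Sum>y\<in>U. 2 * c y * Y y \<omega>)" for \<omega>
    by (simp add: X_def power2_eq_square sum_distrib_left mult.assoc flip: exp_add mult_2)
  have X_integrable: "integrable M X" and X_lower: "1 + \<rho> / 4 \<le> expectation X"
    using exp_bounds[of c] c_small1 c_sq_sum by (simp_all add: X_def)
  have X_sq_integrable: "integrable M (\<lambda>\<omega>. (X \<omega>)\<^sup>2)" and X_sq_upper: "expectation (\<lambda>\<omega>. (X \<omega>)\<^sup>2) \<le> exp (4 * \<sigma>)"
    using exp_bounds[of "\<lambda>y. 2 * c y"] c_small c2_sq_sum \<rho>_bounds
    by (auto simp: X_sq mult.assoc intro: order_trans)
  have "?A \<in> events" unfolding Y_def by measurable
  moreover have "X \<omega> \<le> 1 + \<sigma> / 16" if "\<omega> \<in> space M - ?A" for \<omega>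
  proof -
    have "(\<Sum>y\<in>U. a y * Y y \<omega>) \<le> ln (1 + \<sigma> / 16) * r"
      using that by (auto simp: Y_def \<sigma>_def r_def)
    then have "(\<Sum>y\<in>U. c y * Y y \<omega>) \<le> ln (1 + \<sigma> / 16)"
      using r_pos by (simp add: c_def sum_divide_distrib[symmetric] divide_le_eq mult_ac)
    then show ?thesis using \<sigma>_pos by (simp add: X_def ln_ge_iff)
  qed
  moreover have "1 + \<sigma> / 16 \<le> expectation X" using X_lower \<rho>_bounds \<sigma>_pos by linarith
  ultimately have "(expectation X - (1 + \<sigma> / 16))\<^sup>2 \<le> expectation (\<lambda>\<omega>. (X \<omega>)\<^sup>2) * prob ?A"
    using \<sigma>_pos by (intro second_moment_tail_bound X_integrable X_sq_integrable) auto
  moreover have "(\<sigma> / 16)\<^sup>2 \<le> (expectation X - (1 + \<sigma> / 16))\<^sup>2"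
    using X_lower \<rho>_bounds \<sigma>_pos by (intro power_mono) auto
  moreover have "expectation (\<lambda>\<omega>. (X \<omega>)\<^sup>2) * prob ?A \<le> exp (4 * \<sigma>) * prob ?A"
    using X_sq_upper by (rule mult_right_mono) simp
  ultimately have "(\<sigma> / 16)\<^sup>2 \<le> exp (4 * \<sigma>) * prob ?A" by linarith
  then show ?thesis
    by (simp add: \<sigma>_def exp_minus field_simps power2_eq_square)
qed

lemma tail_sum_deviation_prob:
  fixes a :: "'v \<Rightarrow> real"
  assumes U: "finite U" and "r > 0"
  shows "prob {\<omega>\<in>space M. r \<le> \<bar>\<Sum>y\<in>U. a y * tail_centred L (s y \<omega>)\<bar>}
    \<le> (\<Sum>y\<in>U. (a y)\<^sup>2) * tail_moment L / r\<^sup>2"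
proof -
  define Z where "Z y \<omega> = tail_centred L (s y \<omega>)" for y \<omega>
  have indep: "indep_vars (\<lambda>_. borel) Z U"
    unfolding Z_def by (rule indep_vars_comp) simp
  have Z_sq_int: "integrable M (\<lambda>\<omega>. (Z y \<omega>)\<^sup>2)" for y
    unfolding Z_def by (subst integrable_comp_iff) (simp_all add: integrable_tail_centred_sq)
  have Z_mean: "expectation (Z y) = 0" for y
    unfolding Z_def by (subst expectation_comp) (simp_all add: tail_centred_mean)
  have Z_second: "expectation (\<lambda>\<omega>. (Z y \<omega>)\<^sup>2) = expectation (\<lambda>\<omega>. (tail_centred L (s v0 \<omega>))\<^sup>2)" for y
    unfolding Z_def by (rule expectation_comp) simp
  note second = indep_sum_second_moment[OF indep U Z_sq_int Z_mean Z_second]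
  have "prob {\<omega>\<in>space M. r \<le> \<bar>\<Sum>y\<in>U. a y * Z y \<omega>\<bar>}
      \<le> expectation (\<lambda>\<omega>. (\<Sum>y\<in>U. a y * Z y \<omega>)\<^sup>2) / r\<^sup>2"
    using second(1) \<open>r > 0\<close> by (intro second_moment_method) (simp_all add: Z_def)
  also have "\<dots> \<le> (\<Sum>y\<in>U. (a y)\<^sup>2) * tail_moment L / r\<^sup>2"
    unfolding second(2) using tail_centred_second_moment_le[of L]
    by (intro divide_right_mono mult_left_mono) (simp_all add: sum_nonneg)
  finally show ?thesis by (simp add: Z_def)
qed

theorem weighted_sum_exceeds_with_positive_prob:
  fixes B :: real
  shows "\<exists>c>0. \<exists>t>0. \<exists>V\<^sub>0. \<forall>U (a :: 'v \<Rightarrow> real). finite U \<longrightarrow> (\<forall>y\<in>U. \<bar>a y\<bar> \<le> B) \<longrightarrow>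
    V\<^sub>0 < (\<Sum>y\<in>U. (a y)\<^sup>2) \<longrightarrow>
    c \<le> prob {\<omega>\<in>space M. t * sqrt (\<Sum>y\<in>U. (a y)\<^sup>2) < (\<Sum>y\<in>U. a y * (s y \<omega> - 1))}"
proof -
  define \<sigma> where "\<sigma> = variance (s v0)"
  define c where "c = \<sigma>\<^sup>2 * exp (- 4 * \<sigma>) / 256"
  define t where "t = ln (1 + \<sigma> / 16) / 2"
  have \<sigma>_pos: "\<sigma> > 0" using s_variance_pos by (simp add: \<sigma>_def)
  then have c_pos: "c > 0" and t_pos: "t > 0" by (simp_all add: c_def t_def)
  obtain L where "L \<ge> 1" and L_tail: "tail_moment L \<le> min (\<sigma> / 4) (c * t\<^sup>2 / 2)"
    using tail_moment_small[of "min (\<sigma> / 4) (c * t\<^sup>2 / 2)"] \<sigma>_pos c_pos t_pos by auto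
  have main: "c / 2 \<le> prob {\<omega>\<in>space M. t * sqrt (\<Sum>y\<in>U. (a y)\<^sup>2) < (\<Sum>y\<in>U. a y * (s y \<omega> - 1))}"
    if U: "finite U" and a_bounded: "\<forall>y\<in>U. \<bar>a y\<bar> \<le> B"
      and V_large: "(8 * B * L)\<^sup>2 < (\<Sum>y\<in>U. (a y)\<^sup>2)" for U and a :: "'v \<Rightarrow> real"
  proof -
    define r where "r = sqrt (\<Sum>y\<in>U. (a y)\<^sup>2)"
    have V_pos: "(\<Sum>y\<in>U. (a y)\<^sup>2) > 0"
      using V_large by (meson le_less_trans zero_le_power2)
    have coeff_small: "8 * L * \<bar>a y\<bar> \<le> r" if "y \<in> U" for y
    proof -
      have "\<bar>a y\<bar> \<le> \<bar>B\<bar>" using a_bounded that by (meson abs_ge_self order_trans)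
      then have "8 * L * \<bar>a y\<bar> \<le> \<bar>8 * B * L\<bar>"
        using \<open>L \<ge> 1\<close> by (simp add: abs_mult)
      also have "\<dots> \<le> r"
        using V_large unfolding r_def by (metis real_sqrt_abs real_sqrt_le_mono less_imp_le)
      finally show ?thesis .
    qed
    have "c \<le> prob {\<omega>\<in>space M. ln (1 + \<sigma> / 16) * r < (\<Sum>y\<in>U. a y * trunc_centred L (s y \<omega>))}"
      unfolding c_def \<sigma>_def r_def
    proof (rule trunc_sum_exceeds_with_positive_prob[OF _ _ U V_pos])
      show "0 < L" using \<open>L \<ge> 1\<close> by simp
      show "tail_moment L \<le> variance (s v0) / 4" using L_tail by (simp add: \<sigma>_def)
    qed (use coeff_small in \<open>simp add: r_def\<close>)
    then have "c \<le> prob {\<omega>\<in>space M. 2 * t * r < (\<Sum>y\<in>U. a y * trunc_centred L (s y \<omega>))}"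
      by (simp add: t_def)
    also have "\<dots> \<le> prob ({\<omega>\<in>space M. t * r < (\<Sum>y\<in>U. a y * (s y \<omega> - 1))}
        \<union> {\<omega>\<in>space M. t * r \<le> \<bar>\<Sum>y\<in>U. a y * tail_centred L (s y \<omega>)\<bar>})"
    proof (intro finite_measure_mono subsetI)
      fix \<omega> assume "\<omega> \<in> {\<omega>\<in>space M. 2 * t * r < (\<Sum>y\<in>U. a y * trunc_centred L (s y \<omega>))}"
      moreover have "(\<Sum>y\<in>U. a y * (s y \<omega> - 1))
          = (\<Sum>y\<in>U. a y * trunc_centred L (s y \<omega>)) + (\<Sum>y\<in>U. a y * tail_centred L (s y \<omega>))"
        by (simp only: trunc_centred_plus_tail_centred[of L, symmetric] distrib_left sum.distrib)
      ultimately show "\<omega> \<in> {\<omega>\<in>space M. t * r < (\<Sum>y\<in>U. a y * (s y \<omega> - 1))}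
          \<union> {\<omega>\<in>space M. t * r \<le> \<bar>\<Sum>y\<in>U. a y * tail_centred L (s y \<omega>)\<bar>}"
        by auto
    qed simp
    also have "\<dots> \<le> prob {\<omega>\<in>space M. t * r < (\<Sum>y\<in>U. a y * (s y \<omega> - 1))}
        + prob {\<omega>\<in>space M. t * r \<le> \<bar>\<Sum>y\<in>U. a y * tail_centred L (s y \<omega>)\<bar>}"
      by (rule measure_Un_le) simp_all
    also have "prob {\<omega>\<in>space M. t * r \<le> \<bar>\<Sum>y\<in>U. a y * tail_centred L (s y \<omega>)\<bar>}
        \<le> (\<Sum>y\<in>U. (a y)\<^sup>2) * tail_moment L / (t * r)\<^sup>2"
      using t_pos V_pos by (intro tail_sum_deviation_prob U) (simp add: r_def)
    also have "\<dots> = tail_moment L / t\<^sup>2"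
      using V_pos t_pos by (simp add: r_def power_mult_distrib)
    also have "\<dots> \<le> c / 2"
      using L_tail t_pos by (simp add: field_simps)
    finally show ?thesis by (simp add: r_def)
  qed
  then have "\<forall>U (a :: 'v \<Rightarrow> real). finite U \<longrightarrow> (\<forall>y\<in>U. \<bar>a y\<bar> \<le> B) \<longrightarrow>
      (8 * B * L)\<^sup>2 < (\<Sum>y\<in>U. (a y)\<^sup>2) \<longrightarrow>
      c / 2 \<le> prob {\<omega>\<in>space M. t * sqrt (\<Sum>y\<in>U. (a y)\<^sup>2) < (\<Sum>y\<in>U. a y * (s y \<omega> - 1))}"
    by blast
  moreover have "c / 2 > 0" using c_pos by simp
  ultimately show ?thesis using t_pos by blast
qed

context
  fixes W :: "nat \<Rightarrow> 'v set" and w :: "nat \<Rightarrow> 'v \<Rightarrow> real" and B :: real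
  assumes finite_W: "\<And>n. finite (W n)" and w_bounded: "\<And>n y. \<bar>w n y\<bar> \<le> B"
begin

definition dev_sum :: "nat \<Rightarrow> 'w \<Rightarrow> real" where
  "dev_sum n \<omega> = (\<Sum>y\<in>W n. w n y * (s y \<omega> - 1))"

definition dev_sums_bounded_by :: "nat \<Rightarrow> 'w set" where
  "dev_sums_bounded_by K = {\<omega>\<in>space M. \<forall>n. dev_sum n \<omega> \<le> real K}"

definition dev_sums_bounded :: "'w set" where
  "dev_sums_bounded = {\<omega>\<in>space M. \<exists>K::nat. \<forall>n. dev_sum n \<omega> \<le> real K}"

lemma dev_sum_measurable [measurable]: "dev_sum n \<in> borel_measurable M"
  unfolding dev_sum_def by measurable

lemma dev_sums_bounded_by_measurable [measurable]: "dev_sums_bounded_by K \<in> events"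
  unfolding dev_sums_bounded_by_def by measurable

lemma dev_sums_bounded_measurable [measurable]: "dev_sums_bounded \<in> events"
  unfolding dev_sums_bounded_def by measurable

lemma prob_dev_sums_bounded_lt_1:
  assumes sq_unbounded: "\<And>C. \<exists>n. (\<Sum>y\<in>W n. (w n y)\<^sup>2) > C"
  shows "prob dev_sums_bounded < 1"
proof -
  obtain c t V\<^sub>0 where "c > 0" "t > 0" and exceeds:
    "\<And>U (a :: 'v \<Rightarrow> real). finite U \<Longrightarrow> \<forall>y\<in>U. \<bar>a y\<bar> \<le> B \<Longrightarrow> V\<^sub>0 < (\<Sum>y\<in>U. (a y)\<^sup>2) \<Longrightarrow>
      c \<le> prob {\<omega>\<in>space M. t * sqrt (\<Sum>y\<in>U. (a y)\<^sup>2) < (\<Sum>y\<in>U. a y * (s y \<omega> - 1))}"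
    using weighted_sum_exceeds_with_positive_prob[of B] by blast
  have "prob (dev_sums_bounded_by K) \<le> 1 - c" for K
  proof -
    obtain n where n: "(\<Sum>y\<in>W n. (w n y)\<^sup>2) > max V\<^sub>0 ((real K / t)\<^sup>2)"
      using sq_unbounded by blast
    define A where "A = {\<omega>\<in>space M. t * sqrt (\<Sum>y\<in>W n. (w n y)\<^sup>2) < dev_sum n \<omega>}"
    have "A \<in> events" unfolding A_def by measurable
    have "c \<le> prob A"
      unfolding A_def dev_sum_def using n w_bounded by (intro exceeds finite_W) auto
    have "real K / t \<le> sqrt (\<Sum>y\<in>W n. (w n y)\<^sup>2)"
      using n by (intro real_le_rsqrt) simp
    then have "real K \<le> t * sqrt (\<Sum>y\<in>W n. (w n y)\<^sup>2)"
      using \<open>t > 0\<close> by (simp add: field_simps)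
    then have "dev_sums_bounded_by K \<subseteq> space M - A"
      unfolding dev_sums_bounded_by_def A_def by (auto dest!: spec[of _ n])
    then have "prob (dev_sums_bounded_by K) \<le> prob (space M - A)"
      using \<open>A \<in> events\<close> by (intro finite_measure_mono) auto
    also have "\<dots> = 1 - prob A" using prob_compl[OF \<open>A \<in> events\<close>] .
    finally show ?thesis using \<open>c \<le> prob A\<close> by simp
  qed
  moreover have "(\<lambda>K. prob (dev_sums_bounded_by K)) \<longlonglongrightarrow> prob (\<Union>K. dev_sums_bounded_by K)"
    by (intro finite_Lim_measure_incseq incseq_SucI) (auto simp: dev_sums_bounded_by_def intro: order_trans)
  ultimately have "prob (\<Union>K. dev_sums_bounded_by K) \<le> 1 - c"
    by (intro LIMSEQ_le_const2) auto
  moreover have "dev_sums_bounded = (\<Union>K. dev_sums_bounded_by K)"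
    by (auto simp: dev_sums_bounded_def dev_sums_bounded_by_def)
  ultimately show ?thesis using \<open>c > 0\<close> by simp
qed

text \<open>Changing finitely many of the \<open>s y\<close> perturbs every \<open>dev_sum n\<close> by at most a fixed
  amount, so boundedness of the sums is a tail event.\<close>
lemma dev_sums_bounded_tail_event:
  fixes e :: "nat \<Rightarrow> 'v"
  assumes "bij e"
  shows "dev_sums_bounded \<in> tail_events (\<lambda>i. sigma_sets (space M) {s (e i) -` A \<inter> space M | A. A \<in> sets borel})"
    (is "_ \<in> tail_events ?\<F>")
  unfolding tail_events_def
proof (rule InterI, clarsimp)
  fix N
  define N' where "N' = sigma (space M) (\<Union>i\<in>{N..}. ?\<F> i)"
  have "(\<Union>i\<in>{N..}. ?\<F> i) \<subseteq> Pow (space M)"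
    by (auto dest: sigma_sets_into_sp[rotated])
  then have space_N': "space N' = space M" and sets_N': "sets N' = sigma_sets (space M) (\<Union>i\<in>{N..}. ?\<F> i)"
    by (simp_all add: N'_def space_measure_of sets_measure_of)
  define F where "F = e ` {..<N}"
  have s_measurable_N': "s y \<in> borel_measurable N'" if "y \<notin> F" for y
  proof -
    obtain i where "y = e i" using \<open>bij e\<close> by (metis bij_pointE)
    with that have "i \<ge> N" and "y = e i" by (auto simp: F_def)
    show ?thesis
    proof (rule measurableI)
      fix A :: "real set" assume "A \<in> sets borel"
      then have "s y -` A \<inter> space M \<in> ?\<F> i"
        using \<open>y = e i\<close> by (intro sigma_sets.Basic) auto
      then show "s y -` A \<inter> space N' \<in> sets N'"
        unfolding space_N' sets_N' using \<open>i \<ge> N\<close> by (intro sigma_sets.Basic) auto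
    qed simp
  qed
  define rest where "rest n \<omega> = (\<Sum>y\<in>W n - F. w n y * (s y \<omega> - 1))" for n \<omega>
  have rest_measurable [measurable]: "rest n \<in> borel_measurable N'" for n
    unfolding rest_def using s_measurable_N' by (intro borel_measurable_sum) auto
  have rest_close: "\<bar>dev_sum n \<omega> - rest n \<omega>\<bar> \<le> (\<Sum>y\<in>F. B * \<bar>s y \<omega> - 1\<bar>)" for n \<omega>
  proof -
    have "\<bar>dev_sum n \<omega> - rest n \<omega>\<bar> = \<bar>\<Sum>y\<in>W n \<inter> F. w n y * (s y \<omega> - 1)\<bar>"
      unfolding dev_sum_def rest_def by (subst sum.Int_Diff[OF finite_W, where B=F]) simp
    also have "\<dots> \<le> (\<Sum>y\<in>W n \<inter> F. B * \<bar>s y \<omega> - 1\<bar>)"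
      using w_bounded by (intro order_trans[OF sum_abs] sum_mono) (simp add: abs_mult mult_right_mono)
    also have "\<dots> \<le> (\<Sum>y\<in>F. B * \<bar>s y \<omega> - 1\<bar>)"
      using w_bounded[of 0 v0] by (intro sum_mono2) (auto simp: F_def)
    finally show ?thesis .
  qed
  have "(\<exists>K::nat. \<forall>n. dev_sum n \<omega> \<le> real K) \<longleftrightarrow> (\<exists>K::nat. \<forall>n. rest n \<omega> \<le> real K)" for \<omega>
    by (rule nat_bounded_iff_of_bounded_diff[OF rest_close])
  then have "dev_sums_bounded = {\<omega>\<in>space N'. \<exists>K::nat. \<forall>n. rest n \<omega> \<le> real K}"
    unfolding dev_sums_bounded_def space_N' by simp
  also have "\<dots> \<in> sets N'" by measurable
  finally show "dev_sums_bounded \<in> sigma_sets (space M) (\<Union>i\<in>{N..}. ?\<F> i)"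
    unfolding sets_N' .
qed

theorem AE_dev_sums_unbounded:
  assumes countable: "countable (UNIV :: 'v set)" and infinite: "infinite (UNIV :: 'v set)"
    and sq_unbounded: "\<And>C. \<exists>n. (\<Sum>y\<in>W n. (w n y)\<^sup>2) > C"
  shows "AE \<omega> in M. \<forall>K. \<exists>n. K < (\<Sum>y\<in>W n. w n y * (s y \<omega> - 1))"
proof -
  define e :: "nat \<Rightarrow> 'v" where "e = from_nat_into UNIV"
  have "bij e"
    unfolding e_def using bij_betw_from_nat_into[OF countable infinite] by simp
  define \<F> where "\<F> i = sigma_sets (space M) {s (e i) -` A \<inter> space M | A. A \<in> sets borel}" for i
  have "indep_sets (\<lambda>y. sigma_sets (space M) {s y -` A \<inter> space M | A. A \<in> sets borel}) UNIV"
    using s_indep unfolding indep_vars_def by simp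
  from indep_sets_reindex_inj[OF this, of e] have "indep_sets \<F> UNIV"
    unfolding \<F>_def using \<open>bij e\<close> by (simp add: bij_is_inj)
  moreover have "sigma_algebra (space M) (\<F> i)" for i
    unfolding \<F>_def by (rule sigma_algebra_sigma_sets) auto
  moreover have "dev_sums_bounded \<in> tail_events \<F>"
    unfolding \<F>_def by (rule dev_sums_bounded_tail_event[OF \<open>bij e\<close>])
  ultimately have "prob dev_sums_bounded = 0 \<or> prob dev_sums_bounded = 1"
    by (intro kolmogorov_0_1_law)
  then have "dev_sums_bounded \<in> null_sets M"
    using prob_dev_sums_bounded_lt_1[OF sq_unbounded]
    by (auto simp: null_sets_def emeasure_eq_measure)
  then show ?thesis
  proof (rule AE_I')
    show "{\<omega>\<in>space M. \<not> (\<forall>K. \<exists>n. K < (\<Sum>y\<in>W n. w n y * (s y \<omega> - 1)))} \<subseteq> dev_sums_bounded"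
    proof (intro subsetI)
      fix \<omega> assume "\<omega> \<in> {\<omega>\<in>space M. \<not> (\<forall>K. \<exists>n. K < (\<Sum>y\<in>W n. w n y * (s y \<omega> - 1)))}"
      then obtain K where "\<omega> \<in> space M" and "\<forall>n. (\<Sum>y\<in>W n. w n y * (s y \<omega> - 1)) \<le> K"
        by (auto simp: not_less)
      then have "\<forall>n. (\<Sum>y\<in>W n. w n y * (s y \<omega> - 1)) \<le> real (nat \<lceil>K\<rceil>)"
        by (meson order_trans real_nat_ceiling_ge)
      then show "\<omega> \<in> dev_sums_bounded"
        using \<open>\<omega> \<in> space M\<close> unfolding dev_sums_bounded_def dev_sum_def by blast
    qed
  qed
qed

end

end

theorem lemma5p3:
  fixes E :: "'v \<Rightarrow> 'v \<Rightarrow> bool" and v0 :: 'v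
    and M :: "'w measure" and s :: "'v \<Rightarrow> 'w \<Rightarrow> real"
  assumes "simple_graph E" and "infinite (UNIV :: 'v set)" and "connected_graph E"
    and "locally_finite E" and "vertex_transitive E"
    and transient: "\<forall>y. summable (\<lambda>j. srw_prob E j v0 y)"
    and "\<not> ((\<lambda>y. (green E v0 y)\<^sup>2) summable_on UNIV)"
    and "prob_space M"
    and "\<forall>x. s x \<in> borel_measurable M"
    and "prob_space.indep_vars M (\<lambda>_. borel) s UNIV"
    and "\<forall>x. distr M borel (s x) = distr M borel (s v0)"
    and "integrable M (s v0)"
    and "prob_space.expectation M (s v0) = 1"
    and "integrable M (\<lambda>\<omega>. (s v0 \<omega>)\<^sup>2)"
    and "prob_space.variance M (s v0) > 0"
  shows "AE \<omega> in M. \<not> stabilizes E (\<lambda>x. s x \<omega>)"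
proof -
  interpret G: transitive_graph E v0
    using assms(1-5) by unfold_locales
  interpret P: iid_unit_mean M s v0
    unfolding iid_unit_mean_def iid_unit_mean_axioms_def using assms(8-15) by simp
  have "AE \<omega> in M. \<forall>K. \<exists>n. K < (\<Sum>y\<in>G.walk_ball n. G.green_trunc n y * (s y \<omega> - 1))"
  proof (rule P.AE_dev_sums_unbounded)
    show "\<bar>G.green_trunc n y\<bar> \<le> 2 * green E v0 v0 + 1" for n y
      using G.green_trunc_le G.green_trunc_nonneg transient by simp
    show "\<exists>n. (\<Sum>y\<in>G.walk_ball n. (G.green_trunc n y)\<^sup>2) > C" for C
      using G.green_trunc_sq_unbounded[OF transient assms(7)] .
  qed (use G.finite_walk_ball G.countable_vertices assms(2) in auto)
  then show ?thesis
  proof (rule eventually_mono)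
    fix \<omega> assume unbounded: "\<forall>K. \<exists>n. K < (\<Sum>y\<in>G.walk_ball n. G.green_trunc n y * (s y \<omega> - 1))"
    show "\<not> stabilizes E (\<lambda>x. s x \<omega>)"
    proof
      assume "stabilizes E (\<lambda>x. s x \<omega>)"
      then obtain K where "\<forall>n. (\<Sum>y\<in>G.walk_ball n. G.green_trunc n y * (s y \<omega> - 1)) \<le> K"
        using G.stabilizes_imp_weighted_sums_bounded by blast
      with unbounded show False by (meson not_less)
    qed
  qed
qed

end
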